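(* Suppose all bidders' valuations are constrained additive over independent items. Let $D=\times_{i,j}D_{ij}$ and $\hat D=\times_{i,j}\hat D_{ij}$, where each $D_{ij}$ and $\hat D_{ij}$ is supported on $[0,H]$ and $\|D_{ij}-\hat D_{ij}\|_K\le\xi$ for all $i\in[n]$, $j\in[m]$. For any sequential posted price with entry fee mechanism (SPEM), let $\textsc{Rev}$ and $\widehat{\textsc{Rev}}$ be its expected revenue under $D$ and $\hat D$ respectively. Then $$\left|\textsc{Rev}-\widehat{\textsc{Rev}}\right|\le2nm\xi\cdot\left(mH+\mathrm{OPT}\right).$$
   Context: There are $n$ bidders and $m$ items; bidder $i$'s type is $t_i=(t_{i1},\dots,t_{im})$ with $t_{ij}$ (her value for item $j$) drawn independently from $D_{ij}$ (or $\hat D_{ij}$). Constrained additive: $v_i(t_i,S)=\max_{R\subseteq S,R\in\mathcal I_i}\sum_{j\in R}t_{ij}$ for a downward-closed $\mathcal I_i\subseteq2^{[m]}$. Kolmogorov distance: $\|P-Q\|_K=\sup_x|\Pr_P[X\le x]-\Pr_Q[X\le x]|$. An SPEM is given by prices $\{p_{ij}\}$ and entry fee functions $\delta_i:2^{[m]}\to\mathbb R$; starting with $S=[m]$, bidders $i=1,\dots,n$ are visited in order; bidder $i$ is shown the available set $S$ and entry fee $\delta_i(S)$; if she pays the fee she receives her favorite bundle $S_i^*\in\arg\max_{S'\subseteq S}v_i(t_i,S')-\sum_{j\in S'}p_{ij}$, pays $\sum_{j\in S_i^*}p_{ij}$, and $S\leftarrow S\setminus S_i^*$; otherwise she gets and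 pays nothing. OPT denotes the optimal expected revenue achievable by any randomized BIC mechanism. *)

theory Defs
  imports "HOL-Probability.Probability"
begin

text \<open>Bidders are 0..<n (visited in this order), items are 0..<m.
  A type profile is a function t :: nat \<times> nat \<Rightarrow> real, t (i,j) = value of bidder i for item j.\<close>

definition constrained_family :: "nat \<Rightarrow> nat set set \<Rightarrow> bool" where
  "constrained_family m F \<longleftrightarrow> {} \<in> F \<and> (\<forall>S\<in>F. S \<subseteq> {..<m}) \<and> (\<forall>S\<in>F. \<forall>T. T \<subseteq> S \<longrightarrow> T \<in> F)"

definition val :: "(nat \<Rightarrow> nat set set) \<Rightarrow> nat \<Rightarrow> (nat \<Rightarrow> real) \<Rightarrow> nat set \<Rightarrow> real" where
  "val I i ti S = Max ((\<lambda>R. \<Sum>j\<in>R. ti j) ` {R. R \<subseteq> S \<and> R \<in> I i})"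

definition kolmogorov_dist :: "real measure \<Rightarrow> real measure \<Rightarrow> real" where
  "kolmogorov_dist P Q = (SUP x::real. \<bar>measure P {..x} - measure Q {..x}\<bar>)"

definition prof :: "nat \<Rightarrow> nat \<Rightarrow> (nat \<Rightarrow> nat \<Rightarrow> real measure) \<Rightarrow> (nat \<times> nat \<Rightarrow> real) measure" where
  "prof n m D = (\<Pi>\<^sub>M ij \<in> {..<n} \<times> {..<m}. D (fst ij) (snd ij))"

definition util :: "(nat \<Rightarrow> nat set set) \<Rightarrow> (nat \<Rightarrow> nat \<Rightarrow> real) \<Rightarrow> nat \<Rightarrow> (nat \<Rightarrow> real) \<Rightarrow> nat set \<Rightarrow> real" where
  "util I pr i ti B = val I i ti B - (\<Sum>j\<in>B. pr i j)"

text \<open>Favorite bundle among subsets of S; ties broken by the (injective) priority rk i.\<close>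
definition fav :: "(nat \<Rightarrow> nat set set) \<Rightarrow> (nat \<Rightarrow> nat \<Rightarrow> real) \<Rightarrow> (nat \<Rightarrow> nat set \<Rightarrow> nat)
    \<Rightarrow> nat \<Rightarrow> (nat \<Rightarrow> real) \<Rightarrow> nat set \<Rightarrow> nat set" where
  "fav I pr rk i ti S =
     (ARG_MIN (rk i) B. B \<subseteq> S \<and> util I pr i ti B = Max (util I pr i ti ` Pow S))"

text \<open>State after visiting bidders 0..<i: (available items, revenue collected so far).
  A bidder pays the entry fee iff the utility of her favorite bundle is at least the fee.\<close>
primrec spem_run :: "nat \<Rightarrow> (nat \<Rightarrow> nat set set) \<Rightarrow> (nat \<Rightarrow> nat \<Rightarrow> real) \<Rightarrow> (nat \<Rightarrow> nat set \<Rightarrow> real)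
    \<Rightarrow> (nat \<Rightarrow> nat set \<Rightarrow> nat) \<Rightarrow> (nat \<times> nat \<Rightarrow> real) \<Rightarrow> nat \<Rightarrow> nat set \<times> real" where
  "spem_run m I pr \<delta> rk t 0 = ({..<m}, 0)"
| "spem_run m I pr \<delta> rk t (Suc i) =
     (let (S, r) = spem_run m I pr \<delta> rk t i;
          ti = (\<lambda>j. t (i, j));
          B = fav I pr rk i ti S
      in if util I pr i ti B \<ge> \<delta> i S
         then (S - B, r + \<delta> i S + (\<Sum>j\<in>B. pr i j))
         else (S, r))"

definition spem_rev :: "nat \<Rightarrow> nat \<Rightarrow> (nat \<Rightarrow> nat set set) \<Rightarrow> (nat \<Rightarrow> nat \<Rightarrow> real) \<Rightarrow> (nat \<Rightarrow> nat set \<Rightarrow> real)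
    \<Rightarrow> (nat \<Rightarrow> nat set \<Rightarrow> nat) \<Rightarrow> (nat \<times> nat \<Rightarrow> real) \<Rightarrow> real" where
  "spem_rev n m I pr \<delta> rk t = snd (spem_run m I pr \<delta> rk t n)"

definition spem_exp_rev :: "nat \<Rightarrow> nat \<Rightarrow> (nat \<Rightarrow> nat set set) \<Rightarrow> (nat \<Rightarrow> nat \<Rightarrow> real) \<Rightarrow> (nat \<Rightarrow> nat set \<Rightarrow> real)
    \<Rightarrow> (nat \<Rightarrow> nat set \<Rightarrow> nat) \<Rightarrow> (nat \<Rightarrow> nat \<Rightarrow> real measure) \<Rightarrow> real" where
  "spem_exp_rev n m I pr \<delta> rk D = (\<integral>t. spem_rev n m I pr \<delta> rk t \<partial>prof n m D)"

definition upd_bidder :: "nat \<Rightarrow> (nat \<times> nat \<Rightarrow> real) \<Rightarrow> nat \<Rightarrow> (nat \<Rightarrow> real) \<Rightarrow> nat \<times> nat \<Rightarrow> real" where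
  "upd_bidder m t i s = (\<lambda>(k, j). if k = i \<and> j < m then s j else t (k, j))"

definition in_box :: "nat \<Rightarrow> real \<Rightarrow> (nat \<Rightarrow> real) \<Rightarrow> bool" where
  "in_box m H s \<longleftrightarrow> (\<forall>j<m. 0 \<le> s j \<and> s j \<le> H)"

text \<open>x t : distribution over allocations (bidder \<mapsto> bundle); p i t : payment of bidder i.\<close>
definition feasible_alloc :: "nat \<Rightarrow> nat \<Rightarrow> ((nat \<times> nat \<Rightarrow> real) \<Rightarrow> (nat \<Rightarrow> nat set) pmf) \<Rightarrow> bool" where
  "feasible_alloc n m x \<longleftrightarrow>
     (\<forall>t. \<forall>A\<in>set_pmf (x t). (\<forall>i<n. A i \<subseteq> {..<m}) \<and> (\<forall>i<n. \<forall>k<n. i \<noteq> k \<longrightarrow> A i \<inter> A k = {}))"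

text \<open>Interim expected utility of bidder i with true type ti reporting s (others truthful, drawn from D).\<close>
definition interim_util :: "nat \<Rightarrow> nat \<Rightarrow> (nat \<Rightarrow> nat set set) \<Rightarrow> (nat \<Rightarrow> nat \<Rightarrow> real measure)
    \<Rightarrow> ((nat \<times> nat \<Rightarrow> real) \<Rightarrow> (nat \<Rightarrow> nat set) pmf) \<Rightarrow> (nat \<Rightarrow> (nat \<times> nat \<Rightarrow> real) \<Rightarrow> real)
    \<Rightarrow> nat \<Rightarrow> (nat \<Rightarrow> real) \<Rightarrow> (nat \<Rightarrow> real) \<Rightarrow> real" where
  "interim_util n m I D x p i ti s =
     (\<integral>t. (measure_pmf.expectation (x (upd_bidder m t i s)) (\<lambda>A. val I i ti (A i))
           - p i (upd_bidder m t i s)) \<partial>prof n m D)"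

definition well_defined_mech :: "nat \<Rightarrow> nat \<Rightarrow> real \<Rightarrow> (nat \<Rightarrow> nat set set) \<Rightarrow> (nat \<Rightarrow> nat \<Rightarrow> real measure)
    \<Rightarrow> ((nat \<times> nat \<Rightarrow> real) \<Rightarrow> (nat \<Rightarrow> nat set) pmf) \<Rightarrow> (nat \<Rightarrow> (nat \<times> nat \<Rightarrow> real) \<Rightarrow> real) \<Rightarrow> bool" where
  "well_defined_mech n m H I D x p \<longleftrightarrow>
     feasible_alloc n m x \<and>
     (\<forall>i<n. integrable (prof n m D) (p i)) \<and>
     (\<forall>i<n. \<forall>s. in_box m H s \<longrightarrow>
        integrable (prof n m D) (\<lambda>t. p i (upd_bidder m t i s)) \<and>
        (\<forall>ti. in_box m H ti \<longrightarrow> integrable (prof n m D)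
            (\<lambda>t. measure_pmf.expectation (x (upd_bidder m t i s)) (\<lambda>A. val I i ti (A i)))))"

definition BIC_IR_mech :: "nat \<Rightarrow> nat \<Rightarrow> real \<Rightarrow> (nat \<Rightarrow> nat set set) \<Rightarrow> (nat \<Rightarrow> nat \<Rightarrow> real measure)
    \<Rightarrow> ((nat \<times> nat \<Rightarrow> real) \<Rightarrow> (nat \<Rightarrow> nat set) pmf) \<Rightarrow> (nat \<Rightarrow> (nat \<times> nat \<Rightarrow> real) \<Rightarrow> real) \<Rightarrow> bool" where
  "BIC_IR_mech n m H I D x p \<longleftrightarrow>
     well_defined_mech n m H I D x p \<and>
     (\<forall>i<n. \<forall>ti s. in_box m H ti \<longrightarrow> in_box m H s \<longrightarrow>
        interim_util n m I D x p i ti ti \<ge> interim_util n m I D x p i ti s \<and>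
        interim_util n m I D x p i ti ti \<ge> 0)"

definition mech_rev :: "nat \<Rightarrow> nat \<Rightarrow> (nat \<Rightarrow> nat \<Rightarrow> real measure) \<Rightarrow> (nat \<Rightarrow> (nat \<times> nat \<Rightarrow> real) \<Rightarrow> real) \<Rightarrow> real" where
  "mech_rev n m D p = (\<integral>t. (\<Sum>i<n. p i t) \<partial>prof n m D)"

definition OPT :: "nat \<Rightarrow> nat \<Rightarrow> real \<Rightarrow> (nat \<Rightarrow> nat set set) \<Rightarrow> (nat \<Rightarrow> nat \<Rightarrow> real measure) \<Rightarrow> real" where
  "OPT n m H I D = Sup {mech_rev n m D p | x p. BIC_IR_mech n m H I D x p}"

end

theory Submission
  imports Defs
begin

(*
  Fix every value of the type profile except t_ij. Only the stage of bidder i in the SPEM sees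
  t_ij, and there both her tie-broken favourite bundle and her decision to pay the entry fee switch
  at most once, on upward-closed sets of values. Hence the revenue, as a function of t_ij on [0, H],
  takes at most three values in [0, mH] and is constant on the pieces cut out by two nested
  upward-closed sets. Every upward-closed set of reals is a ray, so its probabilities under D_ij and
  its estimate differ by at most the Kolmogorov distance, and the expectations of such a function
  differ by at most 2 xi mH. Replacing the nm coordinates of the product distribution one at a time
  (a hybrid argument, using Fubini) gives a difference of at most 2 nm xi mH. This is stronger than
  the claim: OPT is nonnegative, since the null mechanism is BIC and IR and the revenues of BIC and
  IR mechanisms are bounded by nmH.
*)

section \<open>Upward-closed sets and the Kolmogorov distance\<close>

definition upward_closed :: "'a::order set \<Rightarrow> bool" where
  "upward_closed U \<longleftrightarrow> (\<forall>x\<in>U. \<forall>y. x \<le> y \<longrightarrow> y \<in> U)"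

lemma upward_closed_Int: "upward_closed U \<Longrightarrow> upward_closed V \<Longrightarrow> upward_closed (U \<inter> V)"
  unfolding upward_closed_def by auto

lemma upward_closed_cases:
  fixes U :: "'a::conditionally_complete_linorder set"
  assumes "upward_closed U"
  obtains "U = {}" | "U = UNIV" | c where "U = {c..}" | c where "U = {c<..}"
proof -
  consider "U = {} \<or> U = UNIV" | u z where "u \<in> U" "z \<notin> U" by blast
  then show thesis
  proof cases
    case 2
    have "bdd_below U"
      using assms \<open>z \<notin> U\<close> unfolding upward_closed_def by (metis bdd_belowI linorder_le_cases)
    have above: "y \<in> U" if "Inf U < y" for y
    proof -
      obtain v where "v \<in> U" "v < y" using \<open>Inf U < y\<close> \<open>u \<in> U\<close> \<open>bdd_below U\<close> cInf_less_iff by blast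
      then show ?thesis using assms unfolding upward_closed_def by auto
    qed
    have below: "Inf U \<le> v" if "v \<in> U" for v using that \<open>bdd_below U\<close> by (rule cInf_lower)
    show thesis
    proof (cases "Inf U \<in> U")
      case True
      then have "U = {Inf U..}" using above below by (auto simp: le_less)
      then show thesis by (rule that(3))
    next
      case False
      then have "U = {Inf U<..}" using above below by (auto simp: le_less)
      then show thesis by (rule that(4))
    qed
  qed (use that in blast)
qed

lemma upward_closed_borel: "upward_closed (U :: real set) \<Longrightarrow> U \<in> sets borel"
  by (elim upward_closed_cases) auto

lemma kolmogorov_dist_atMost:
  assumes "prob_space P" "prob_space Q"
  shows "\<bar>measure P {..x} - measure Q {..x}\<bar> \<le> kolmogorov_dist P Q"
proof -
  have "\<bar>measure P {..y} - measure Q {..y}\<bar> \<le> 1" for y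
    using prob_space.prob_le_1[OF assms(1)] prob_space.prob_le_1[OF assms(2)]
      measure_nonneg[of P] measure_nonneg[of Q] by (smt (verit))
  then have "bdd_above (range (\<lambda>y. \<bar>measure P {..y} - measure Q {..y}\<bar>))"
    by (intro bdd_aboveI2)
  then show ?thesis
    unfolding kolmogorov_dist_def by (rule cSUP_upper[OF UNIV_I])
qed

lemma kolmogorov_dist_nonneg: "prob_space P \<Longrightarrow> prob_space Q \<Longrightarrow> 0 \<le> kolmogorov_dist P Q"
  using kolmogorov_dist_atMost[of P Q 0] by linarith

lemma kolmogorov_dist_lessThan:
  assumes P: "prob_space P" "sets P = sets borel" and Q: "prob_space Q" "sets Q = sets borel"
  shows "\<bar>measure P {..<x} - measure Q {..<x}\<bar> \<le> kolmogorov_dist P Q"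
proof -
  define A where "A n = {..x - 1 / Suc n}" for n :: nat
  have "incseq A"
    unfolding A_def incseq_def by (auto intro!: diff_left_mono frac_le)
  moreover have "(\<Union>n. A n) = {..<x}"
  proof safe
    fix y n assume "y \<in> A n"
    then have "y \<le> x - 1 / real (Suc n)" unfolding A_def by simp
    moreover have "0 < 1 / real (Suc n)" by simp
    ultimately show "y < x" by linarith
  next
    fix y assume "y < x"
    then obtain n where "1 / real (Suc n) < x - y" by (metis diff_gt_0_iff_gt nat_approx_posE)
    then show "y \<in> (\<Union>n. A n)" unfolding A_def by (auto intro!: exI[of _ n])
  qed
  ultimately have "(\<lambda>n. measure M (A n)) \<longlonglongrightarrow> measure M {..<x}"
    if "prob_space M" "sets M = sets borel" for M
  proof -
    interpret prob_space M by fact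
    show ?thesis using finite_Lim_measure_incseq[of A] that(2) \<open>incseq A\<close> \<open>(\<Union>n. A n) = {..<x}\<close>
      unfolding A_def by (simp add: image_subset_iff)
  qed
  then have "(\<lambda>n. \<bar>measure P (A n) - measure Q (A n)\<bar>) \<longlonglongrightarrow> \<bar>measure P {..<x} - measure Q {..<x}\<bar>"
    using P Q by (intro tendsto_rabs tendsto_diff)
  then show ?thesis
    by (rule LIMSEQ_le_const2) (use kolmogorov_dist_atMost[OF P(1) Q(1)] in \<open>simp add: A_def\<close>)
qed

lemma kolmogorov_dist_upward_closed:
  assumes P: "prob_space P" "sets P = sets borel" and Q: "prob_space Q" "sets Q = sets borel"
    and "upward_closed U"
  shows "\<bar>measure P U - measure Q U\<bar> \<le> kolmogorov_dist P Q"
proof -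
  have compl: "measure M (- A) = 1 - measure M A"
    if "prob_space M" "sets M = sets borel" "A \<in> sets borel" for M and A :: "real set"
    using prob_space.prob_compl[OF that(1), of A] that(2,3) sets_eq_imp_space_eq[OF that(2)]
    by (simp add: Compl_eq_Diff_UNIV)
  have nonneg: "0 \<le> kolmogorov_dist P Q" using kolmogorov_dist_nonneg P Q by blast
  from \<open>upward_closed U\<close> show ?thesis
  proof (cases rule: upward_closed_cases)
    case 2
    then show ?thesis using compl[OF P, of "{}"] compl[OF Q, of "{}"] nonneg by simp
  next
    case (3 c)
    then have "U = - {..<c}" by auto
    then have "measure M U = 1 - measure M {..<c}" if "prob_space M" "sets M = sets borel" for M
      by (simp only:) (rule compl[OF that], simp)
    then show ?thesis using P Q kolmogorov_dist_lessThan[OF P Q, of c] by simp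
  next
    case (4 c)
    then have "U = - {..c}" by auto
    then have "measure M U = 1 - measure M {..c}" if "prob_space M" "sets M = sets borel" for M
      by (simp only:) (rule compl[OF that], simp)
    then show ?thesis using P Q kolmogorov_dist_atMost[OF P(1) Q(1), of c] by simp
  qed (use nonneg in simp)
qed

section \<open>Step functions and the hybrid argument\<close>

definition two_step_on :: "real set \<Rightarrow> real \<Rightarrow> (real \<Rightarrow> real) \<Rightarrow> bool" where
  "two_step_on X C f \<longleftrightarrow> (\<exists>U1 U2 c0 c1 c2. upward_closed U1 \<and> upward_closed U2 \<and> U2 \<subseteq> U1 \<and>
     c0 \<in> {0..C} \<and> c1 \<in> {0..C} \<and> c2 \<in> {0..C} \<and>
     (\<forall>x\<in>X. f x = (if x \<in> U2 then c2 else if x \<in> U1 then c1 else c0)))"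

lemma two_step_onI:
  assumes U: "upward_closed U1" "upward_closed U2" "U2 \<subseteq> U1" and "0 \<le> C"
    and f: "\<And>x. x \<in> X \<Longrightarrow> f x = F (if x \<in> U2 then s2 else if x \<in> U1 then s1 else s0)"
    and range: "\<And>x. x \<in> X \<Longrightarrow> f x \<in> {0..C}"
  shows "two_step_on X C f"
proof -
  define c where "c s = max 0 (min C (F s))" for s
  have "f x = (if x \<in> U2 then c s2 else if x \<in> U1 then c s1 else c s0)" if "x \<in> X" for x
    using f[OF that] range[OF that] unfolding c_def by (auto split: if_splits)
  moreover have "c s \<in> {0..C}" for s unfolding c_def using \<open>0 \<le> C\<close> by auto
  ultimately show ?thesis unfolding two_step_on_def using U by blast
qed

lemma two_step_on_cong:
  assumes "two_step_on X C f" "\<And>x. x \<in> X \<Longrightarrow> f x = g x"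
  shows "two_step_on X C g"
  using assms unfolding two_step_on_def by (simp cong: ball_cong)

lemma integral_two_step:
  fixes f :: "real \<Rightarrow> real"
  assumes M: "prob_space M" "sets M = sets borel" and X: "AE x in M. x \<in> X"
    and f: "f \<in> borel_measurable borel"
    and U: "upward_closed U1" "upward_closed U2" "U2 \<subseteq> U1"
    and eq: "\<And>x. x \<in> X \<Longrightarrow> f x = (if x \<in> U2 then c2 else if x \<in> U1 then c1 else c0)"
  shows "integral\<^sup>L M f = c0 + (c1 - c0) * measure M U1 + (c2 - c1) * measure M U2"
proof -
  interpret prob_space M by fact
  have U_borel: "U1 \<in> sets borel" "U2 \<in> sets borel" using U upward_closed_borel by auto
  then have U_sets: "U1 \<in> sets M" "U2 \<in> sets M" using M(2) by auto
  define h where "h x = c0 + (c1 - c0) * indicator U1 x + (c2 - c1) * indicator U2 x" for x :: real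
  have "h \<in> borel_measurable borel" unfolding h_def using U_borel by measurable
  have "integral\<^sup>L M f = integral\<^sup>L M h"
  proof (rule integral_cong_AE)
    show "f \<in> borel_measurable M" "h \<in> borel_measurable M"
      using f \<open>h \<in> borel_measurable borel\<close> unfolding measurable_cong_sets[OF M(2) refl] by auto
    show "AE x in M. f x = h x"
      using X by eventually_elim (use eq U(3) in \<open>auto simp: h_def indicator_def\<close>)
  qed
  also have "\<dots> = c0 + (c1 - c0) * measure M U1 + (c2 - c1) * measure M U2"
  proof -
    have "integrable M (indicator U :: real \<Rightarrow> real)" if "U \<in> sets M" for U
      using that by (intro integrable_real_indicator) (auto simp: less_top[symmetric])
    then have "integral\<^sup>L M h = (\<integral>x. c0 \<partial>M) + (\<integral>x. (c1 - c0) * indicator U1 x \<partial>M)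
        + (\<integral>x. (c2 - c1) * indicator U2 x \<partial>M)"
      unfolding h_def using U_sets by (simp add: Bochner_Integration.integral_add)
    then show ?thesis using U_sets by (simp add: prob_space)
  qed
  finally show ?thesis .
qed

lemma two_step_integral_diff:
  assumes P: "prob_space P" "sets P = sets borel" "AE x in P. x \<in> X"
    and Q: "prob_space Q" "sets Q = sets borel" "AE x in Q. x \<in> X"
    and f: "f \<in> borel_measurable borel" "two_step_on X C f"
  shows "\<bar>integral\<^sup>L P f - integral\<^sup>L Q f\<bar> \<le> 2 * kolmogorov_dist P Q * C"
proof -
  obtain U1 U2 c0 c1 c2 where U: "upward_closed U1" "upward_closed U2" "U2 \<subseteq> U1"
    and c: "c0 \<in> {0..C}" "c1 \<in> {0..C}" "c2 \<in> {0..C}"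
    and eq: "\<And>x. x \<in> X \<Longrightarrow> f x = (if x \<in> U2 then c2 else if x \<in> U1 then c1 else c0)"
    using f(2) unfolding two_step_on_def by blast
  have "integral\<^sup>L P f - integral\<^sup>L Q f
      = (c1 - c0) * (measure P U1 - measure Q U1) + (c2 - c1) * (measure P U2 - measure Q U2)"
    using integral_two_step[OF P f(1) U eq] integral_two_step[OF Q f(1) U eq]
    by (simp add: algebra_simps)
  also have "\<bar>\<dots>\<bar> \<le> C * kolmogorov_dist P Q + C * kolmogorov_dist P Q"
    using kolmogorov_dist_upward_closed[OF P(1,2) Q(1,2) U(1)]
      kolmogorov_dist_upward_closed[OF P(1,2) Q(1,2) U(2)] c
    by (intro order_trans[OF abs_triangle_ineq] add_mono)
      (auto simp: abs_mult intro!: mult_mono)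
  finally show ?thesis by (simp add: mult_ac)
qed

lemma prob_space_integral_bounded:
  fixes g :: "'a \<Rightarrow> real"
  assumes "prob_space M" "g \<in> borel_measurable M" "\<And>x. x \<in> space M \<Longrightarrow> g x \<in> {0..C}"
  shows "integrable M g" and "integral\<^sup>L M g \<in> {0..C}"
proof -
  interpret prob_space M by fact
  show "integrable M g"
    by (rule integrable_const_bound[where B = C]) (use assms in auto)
  then have "integral\<^sup>L M g \<le> integral\<^sup>L M (\<lambda>_. C)"
    by (rule integral_mono) (use assms in auto)
  moreover have "0 \<le> integral\<^sup>L M g" by (rule Bochner_Integration.integral_nonneg) (use assms in auto)
  ultimately show "integral\<^sup>L M g \<in> {0..C}" by (simp add: prob_space)
qed

lemma abs_integral_diff_le:
  fixes f g :: "'a \<Rightarrow> real"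
  assumes "prob_space M" "integrable M f" "integrable M g" "AE x in M. \<bar>f x - g x\<bar> \<le> c"
  shows "\<bar>integral\<^sup>L M f - integral\<^sup>L M g\<bar> \<le> c"
proof -
  interpret prob_space M by fact
  have "\<bar>integral\<^sup>L M f - integral\<^sup>L M g\<bar> = \<bar>\<integral>x. f x - g x \<partial>M\<bar>" using assms by simp
  also have "\<dots> \<le> (\<integral>x. \<bar>f x - g x\<bar> \<partial>M)" by (rule integral_abs_bound)
  also have "\<dots> \<le> (\<integral>x. c \<partial>M)" by (rule integral_mono_AE) (use assms in auto)
  finally show ?thesis by (simp add: prob_space)
qed

lemma pair_integral_hybrid:
  fixes F :: "'a \<Rightarrow> 'b \<Rightarrow> real"
  assumes A: "prob_space A" "prob_space A'" "sets A' = sets A"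
    and B: "prob_space B" "prob_space B'" "sets B' = sets B"
    and F: "(\<lambda>(x, y). F x y) \<in> borel_measurable (A \<Otimes>\<^sub>M B)" "\<And>x y. F x y \<in> {0..C}"
    and first: "AE x in A. \<bar>(\<integral>y. F x y \<partial>B) - (\<integral>y. F x y \<partial>B')\<bar> \<le> c1"
    and second: "AE y in B'. \<bar>(\<integral>x. F x y \<partial>A) - (\<integral>x. F x y \<partial>A')\<bar> \<le> c2"
  shows "\<bar>(\<integral>x. \<integral>y. F x y \<partial>B \<partial>A) - (\<integral>x. \<integral>y. F x y \<partial>B' \<partial>A')\<bar> \<le> c1 + c2"
proof -
  have fubini: "integrable (X \<Otimes>\<^sub>M Y) (\<lambda>(x, y). F x y) \<and>
      integrable X (\<lambda>x. \<integral>y. F x y \<partial>Y) \<and> integrable Y (\<lambda>y. \<integral>x. F x y \<partial>X) \<and>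
      (\<integral>y. \<integral>x. F x y \<partial>X \<partial>Y) = (\<integral>x. \<integral>y. F x y \<partial>Y \<partial>X)"
    if X: "prob_space X" "sets X = sets A" and Y: "prob_space Y" "sets Y = sets B" for X Y
  proof -
    interpret pair_prob_space X Y using X Y
      by (simp add: pair_prob_space_def pair_sigma_finite_def prob_space_imp_sigma_finite)
    have XY: "(\<lambda>(x, y). F x y) \<in> borel_measurable (X \<Otimes>\<^sub>M Y)"
      using F(1) by (simp add: measurable_cong_sets[OF sets_pair_measure_cong[OF X(2) Y(2)] refl])
    have YX: "(\<lambda>(y, x). F x y) \<in> borel_measurable (Y \<Otimes>\<^sub>M X)"
      using measurable_comp[OF measurable_pair_swap' XY] by (simp add: comp_def case_prod_unfold)
    have int_XY: "integrable (X \<Otimes>\<^sub>M Y) (\<lambda>(x, y). F x y)"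
      by (rule prob_space_integral_bounded(1)[OF prob_space_pair[OF X(1) Y(1)] XY]) (use F(2) in auto)
    have "integrable X (\<lambda>x. \<integral>y. F x y \<partial>Y)"
    proof (rule prob_space_integral_bounded(1)[OF X(1), where C = C])
      show "(\<lambda>x. \<integral>y. F x y \<partial>Y) \<in> borel_measurable X"
        using XY by (rule M2.borel_measurable_lebesgue_integral)
      show "(\<integral>y. F x y \<partial>Y) \<in> {0..C}" if "x \<in> space X" for x
        using measurable_Pair2[OF XY that] F(2)
        by (intro prob_space_integral_bounded(2)[OF Y(1)]) auto
    qed
    moreover have "integrable Y (\<lambda>y. \<integral>x. F x y \<partial>X)"
    proof (rule prob_space_integral_bounded(1)[OF Y(1), where C = C])
      show "(\<lambda>y. \<integral>x. F x y \<partial>X) \<in> borel_measurable Y"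
        using YX by (rule M1.borel_measurable_lebesgue_integral)
      show "(\<integral>x. F x y \<partial>X) \<in> {0..C}" if "y \<in> space Y" for y
        using measurable_Pair2[OF YX that] F(2)
        by (intro prob_space_integral_bounded(2)[OF X(1)]) auto
    qed
    ultimately show ?thesis using int_XY Fubini_integral[OF int_XY] by simp
  qed
  have "\<bar>(\<integral>x. \<integral>y. F x y \<partial>B \<partial>A) - (\<integral>x. \<integral>y. F x y \<partial>B' \<partial>A)\<bar> \<le> c1"
    using fubini[OF A(1) refl B(1) refl] fubini[OF A(1) refl B(2,3)]
    by (intro abs_integral_diff_le[OF A(1) _ _ first]) auto
  moreover have "\<bar>(\<integral>y. \<integral>x. F x y \<partial>A \<partial>B') - (\<integral>y. \<integral>x. F x y \<partial>A' \<partial>B')\<bar> \<le> c2"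
    using fubini[OF A(1) refl B(2,3)] fubini[OF A(2,3) B(2,3)]
    by (intro abs_integral_diff_le[OF B(2) _ _ second]) auto
  ultimately show ?thesis
    using fubini[OF A(1) refl B(2,3)] fubini[OF A(2,3) B(2,3)] by linarith
qed

lemma AE_PiM_all_in:
  assumes "finite K" "\<And>k. k \<in> K \<Longrightarrow> prob_space (M k)" "\<And>k. k \<in> K \<Longrightarrow> AE x in M k. x \<in> X"
  shows "AE t in PiM K M. \<forall>k\<in>K. t k \<in> X"
  using assms by (intro AE_finite_allI AE_PiM_component) auto

lemma integral_PiM_insert_bounded:
  fixes f :: "('k \<Rightarrow> 'a) \<Rightarrow> real"
  assumes "\<And>k. prob_space (L k)" "finite K" "k \<notin> K"
    and "f \<in> borel_measurable (PiM (insert k K) L)" "\<And>t. f t \<in> {0..C}"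
  shows "integral\<^sup>L (PiM (insert k K) L) f = (\<integral>x. \<integral>y. f (x(k := y)) \<partial>L k \<partial>PiM K L)"
proof (rule product_sigma_finite.product_integral_insert[OF _ assms(2,3)])
  show "product_sigma_finite L"
    using assms(1) by (simp add: product_sigma_finite_def prob_space_imp_sigma_finite)
  show "integrable (PiM (insert k K) L) f"
    by (rule prob_space_integral_bounded(1)[OF prob_space_PiM[OF assms(1)] assms(4,5)])
qed

lemma PiM_hybrid:
  fixes M M' :: "'k \<Rightarrow> real measure" and f :: "('k \<Rightarrow> real) \<Rightarrow> real"
  assumes "finite K"
    and M: "\<And>k. prob_space (M k)" "\<And>k. sets (M k) = sets borel"
    and M': "\<And>k. prob_space (M' k)" "\<And>k. sets (M' k) = sets borel"
    and supp: "\<And>k. k \<in> K \<Longrightarrow> AE x in M k. x \<in> X" "\<And>k. k \<in> K \<Longrightarrow> AE x in M' k. x \<in> X"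
    and dist: "\<And>k. k \<in> K \<Longrightarrow> kolmogorov_dist (M k) (M' k) \<le> \<xi>"
    and f: "f \<in> borel_measurable (PiM K M)" "\<And>t. f t \<in> {0..C}"
    and slices: "\<And>k t. k \<in> K \<Longrightarrow> (\<And>k'. k' \<in> K - {k} \<Longrightarrow> t k' \<in> X) \<Longrightarrow>
       two_step_on X C (\<lambda>x. f (t(k := x)))"
  shows "\<bar>integral\<^sup>L (PiM K M) f - integral\<^sup>L (PiM K M') f\<bar> \<le> 2 * real (card K) * \<xi> * C"
  using assms(1) f slices supp dist
proof (induction K arbitrary: f rule: finite_induct)
  case empty
  show ?case unfolding PiM_empty by simp
next
  case (insert k K)
  have "0 \<le> f t" "f t \<le> C" for t using insert.prems(2)[of t] by simp_all
  then have "0 \<le> C" by (rule order_trans)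
  have supp_k: "AE y in M k. y \<in> X" "AE y in M' k. y \<in> X" using insert.prems(4,5) by simp_all
  have prob_PiM: "prob_space (PiM K L)" if "\<And>k. prob_space (L k)" for L :: "'k \<Rightarrow> real measure"
    using that by (rule prob_space_PiM)
  have meas: "(\<lambda>(x, y). f (x(k := y))) \<in> borel_measurable (PiM K M \<Otimes>\<^sub>M M k)"
    using measurable_comp[OF measurable_add_dim insert.prems(1)] by (simp add: comp_def case_prod_unfold)
  have split: "integral\<^sup>L (PiM (insert k K) L) f = (\<integral>x. \<integral>y. f (x(k := y)) \<partial>L k \<partial>PiM K L)"
    if "\<And>k. prob_space (L k)" "\<And>k. sets (L k) = sets borel" for L
  proof (rule integral_PiM_insert_bounded[OF that(1) insert.hyps(1,2) _ insert.prems(2)])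
    have "sets (PiM (insert k K) L) = sets (PiM (insert k K) M)"
      using that(2) M(2) by (intro sets_PiM_cong) auto
    then show "f \<in> borel_measurable (PiM (insert k K) L)"
      using insert.prems(1) measurable_cong_sets[OF _ refl] by blast
  qed
  have "\<bar>(\<integral>x. \<integral>y. f (x(k := y)) \<partial>M k \<partial>PiM K M) - (\<integral>x. \<integral>y. f (x(k := y)) \<partial>M' k \<partial>PiM K M')\<bar>
      \<le> 2 * \<xi> * C + 2 * real (card K) * \<xi> * C"
  proof (rule pair_integral_hybrid[OF prob_PiM[OF M(1)] prob_PiM[OF M'(1)] _ M(1) M'(1) _ meas])
    show "sets (PiM K M') = sets (PiM K M)" using M(2) M'(2) by (intro sets_PiM_cong) auto
    show "sets (M' k) = sets (M k)" using M(2) M'(2) by simp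
    show "f (x(k := y)) \<in> {0..C}" for x y using insert.prems(2) .
    have "AE x in PiM K M. \<forall>k'\<in>K. x k' \<in> X"
      by (intro AE_PiM_all_in insert.hyps(1) M(1)) (use insert.prems(4) in auto)
    then show "AE x in PiM K M. \<bar>(\<integral>y. f (x(k := y)) \<partial>M k) - (\<integral>y. f (x(k := y)) \<partial>M' k)\<bar> \<le> 2 * \<xi> * C"
      using AE_space
    proof eventually_elim
      case (elim x)
      have "(\<lambda>y. f (x(k := y))) \<in> borel_measurable borel"
        using measurable_Pair2[OF meas elim(2)] unfolding measurable_cong_sets[OF M(2)[of k] refl] by simp
      moreover have "two_step_on X C (\<lambda>y. f (x(k := y)))"
        using elim(1) insert.hyps(2) by (intro insert.prems(3)) auto
      ultimately have "\<bar>(\<integral>y. f (x(k := y)) \<partial>M k) - (\<integral>y. f (x(k := y)) \<partial>M' k)\<bar>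
          \<le> 2 * kolmogorov_dist (M k) (M' k) * C"
        using supp_k M(1,2) M'(1,2) by (intro two_step_integral_diff) simp_all
      also have "\<dots> \<le> 2 * \<xi> * C"
        using insert.prems(6) \<open>0 \<le> C\<close> by (simp add: mult_right_mono)
      finally show ?case .
    qed
    show "AE y in M' k. \<bar>(\<integral>x. f (x(k := y)) \<partial>PiM K M) - (\<integral>x. f (x(k := y)) \<partial>PiM K M')\<bar>
        \<le> 2 * real (card K) * \<xi> * C"
      using supp_k(2)
    proof eventually_elim
      case (elim y)
      show ?case
      proof (rule insert.IH)
        show "(\<lambda>x. f (x(k := y))) \<in> borel_measurable (PiM K M)"
          using measurable_Pair1[OF meas] M(2) by (simp add: sets_eq_imp_space_eq)
        show "two_step_on X C (\<lambda>x. f (t(k' := x, k := y)))"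
          if "k' \<in> K" "\<And>k''. k'' \<in> K - {k'} \<Longrightarrow> t k'' \<in> X" for k' t
        proof -
          have "two_step_on X C (\<lambda>x. f ((t(k := y))(k' := x)))"
            by (rule insert.prems(3)) (use that elim in auto)
          moreover have "k' \<noteq> k" using that(1) insert.hyps(2) by auto
          ultimately show ?thesis by (simp add: fun_upd_twist)
        qed
        show "f (t(k := y)) \<in> {0..C}" for t by (rule insert.prems(2))
        show "AE x in M k'. x \<in> X" "AE x in M' k'. x \<in> X" "kolmogorov_dist (M k') (M' k') \<le> \<xi>"
          if "k' \<in> K" for k'
          using that by (simp_all add: insert.prems(4-6))
      qed
    qed
  qed
  then show ?case
    using insert.hyps by (simp add: split[OF M] split[OF M'] algebra_simps)
qed

section \<open>An SPEM as a function of one value\<close>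

text \<open>Each option's utility is either constant or of the form max(a, b + x): the maximizers are the
  best constant options below the threshold xs and the best options of slope one above it.\<close>
lemma argmax_set_threshold:
  fixes u :: "'b \<Rightarrow> real \<Rightarrow> real"
  assumes fin: "finite A" and ne: "A \<noteq> {}"
    and u: "\<And>B x. B \<in> A \<Longrightarrow> u B x = (if cap B then max (\<alpha> B) (\<beta> B + x) else \<alpha> B)"
  shows "\<exists>T0 T1 xs. T0 \<noteq> {} \<and> T0 \<subseteq> A \<and> T1 \<subseteq> A \<and>
    (\<forall>x. {B\<in>A. u B x = Max ((\<lambda>B. u B x) ` A)} = (if x < xs then T0 else if x = xs then T0 \<union> T1 else T1))"
proof -
  define C0 where "C0 = Max (\<alpha> ` A)"
  define T0 where "T0 = {B\<in>A. \<alpha> B = C0}"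
  have \<alpha>_le: "\<And>B. B \<in> A \<Longrightarrow> \<alpha> B \<le> C0" unfolding C0_def using fin by auto
  have "C0 \<in> \<alpha> ` A" unfolding C0_def using fin ne by (intro Max_in) auto
  then have "T0 \<noteq> {}" unfolding T0_def by auto
  define Cp where "Cp = {B\<in>A. cap B}"
  show ?thesis
  proof (cases "Cp = {}")
    case True
    then have const: "u B x = \<alpha> B" if "B \<in> A" for B x using u[OF that] that unfolding Cp_def by auto
    then have "(\<lambda>B. u B x) ` A = \<alpha> ` A" for x by (rule image_cong[OF refl])
    then have "{B\<in>A. u B x = Max ((\<lambda>B. u B x) ` A)} = T0" for x
      unfolding T0_def C0_def using const by auto
    with \<open>T0 \<noteq> {}\<close> show ?thesis by (intro exI[of _ T0]) (auto simp: T0_def)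
  next
    case False
    define C1 where "C1 = Max (\<beta> ` Cp)"
    define T1 where "T1 = {B\<in>Cp. \<beta> B = C1}"
    have "finite Cp" unfolding Cp_def using fin by auto
    then have \<beta>_le: "\<And>B. B \<in> Cp \<Longrightarrow> \<beta> B \<le> C1" unfolding C1_def by auto
    have "C1 \<in> \<beta> ` Cp" unfolding C1_def using \<open>finite Cp\<close> False by (intro Max_in) auto
    then have "T1 \<noteq> {}" unfolding T1_def by auto
    have Max_u: "Max ((\<lambda>B. u B x) ` A) = max C0 (C1 + x)" for x
    proof (rule Max_eqI)
      show "y \<le> max C0 (C1 + x)" if y: "y \<in> (\<lambda>B. u B x) ` A" for y
      proof -
        obtain B where "B \<in> A" "y = u B x" using y by auto
        then show ?thesis using u[of B x] \<alpha>_le[of B] \<beta>_le[of B] unfolding Cp_def by auto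
      qed
      show "max C0 (C1 + x) \<in> (\<lambda>B. u B x) ` A"
      proof (cases "C1 + x \<le> C0")
        case True
        obtain B where "B \<in> T0" using \<open>T0 \<noteq> {}\<close> by auto
        then show ?thesis using u[of B x] True \<beta>_le[of B]
          unfolding T0_def Cp_def by (auto intro!: image_eqI[of _ _ B])
      next
        case False
        obtain B where "B \<in> T1" using \<open>T1 \<noteq> {}\<close> by auto
        then show ?thesis using u[of B x] False \<alpha>_le[of B]
          unfolding T1_def Cp_def by (auto intro!: image_eqI[of _ _ B])
      qed
    qed (use fin in auto)
    have "B \<in> A \<and> u B x = max C0 (C1 + x)
        \<longleftrightarrow> B \<in> (if x < C0 - C1 then T0 else if x = C0 - C1 then T0 \<union> T1 else T1)" for B x
      using u[of B x] \<alpha>_le[of B] \<beta>_le[of B] unfolding T0_def T1_def Cp_def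
      by (cases "B \<in> A"; cases "cap B") (auto simp: max_def)
    then have "{B\<in>A. u B x = Max ((\<lambda>B. u B x) ` A)}
        = (if x < C0 - C1 then T0 else if x = C0 - C1 then T0 \<union> T1 else T1)" for x
      unfolding Max_u by blast
    moreover have "T0 \<subseteq> A" "T1 \<subseteq> A" unfolding T0_def T1_def Cp_def by auto
    ultimately show ?thesis using \<open>T0 \<noteq> {}\<close> by blast
  qed
qed

lemma arg_min_argmax_threshold:
  fixes u :: "'b \<Rightarrow> real \<Rightarrow> real" and rk :: "'b \<Rightarrow> nat"
  assumes fin: "finite A" and ne: "A \<noteq> {}" and inj: "inj_on rk A"
    and u: "\<And>B x. B \<in> A \<Longrightarrow> u B x = (if cap B then max (\<alpha> B) (\<beta> B + x) else \<alpha> B)"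
  shows "\<exists>W b0 b1. upward_closed W \<and>
    (\<forall>x. arg_min rk (\<lambda>B. B \<in> A \<and> u B x = Max ((\<lambda>B. u B x) ` A)) = (if x \<in> W then b1 else b0))"
proof -
  obtain T0 T1 xs where T: "T0 \<noteq> {}" "T0 \<subseteq> A" "T1 \<subseteq> A"
    and maximizers: "\<forall>x. {B\<in>A. u B x = Max ((\<lambda>B. u B x) ` A)}
      = (if x < xs then T0 else if x = xs then T0 \<union> T1 else T1)"
    using argmax_set_threshold[where u = u and cap = cap and \<alpha> = \<alpha> and \<beta> = \<beta>, OF fin ne u] by blast
  define choice where "choice T = arg_min rk (\<lambda>B. B \<in> T)" for T
  have choice: "choice T \<in> T" "\<And>B. B \<in> T \<Longrightarrow> rk (choice T) \<le> rk B" if "T \<noteq> {}" for T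
    using that arg_min_nat_lemma[of "\<lambda>B. B \<in> T"] unfolding choice_def by blast+
  have choice_eqI: "choice T = B" if "T \<subseteq> A" "B \<in> T" "\<And>B'. B' \<in> T \<Longrightarrow> rk B \<le> rk B'" for T B
    unfolding choice_def using that inj_on_subset[OF inj] by (intro arg_min_inj_eq) auto
  have "choice (T0 \<union> T1) = choice T0 \<or> choice (T0 \<union> T1) = choice T1"
  proof (cases "choice (T0 \<union> T1) \<in> T0")
    case True
    then show ?thesis using choice[of "T0 \<union> T1"] T by (intro disjI1 choice_eqI[symmetric]) auto
  next
    case False
    then have "choice (T0 \<union> T1) \<in> T1" using choice[of "T0 \<union> T1"] T by auto
    then show ?thesis using choice[of "T0 \<union> T1"] T by (intro disjI2 choice_eqI[symmetric]) auto
  qed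
  note union = this
  define W where "W = (if choice (T0 \<union> T1) = choice T1 then {xs..} else {xs<..})"
  have "upward_closed W" unfolding W_def upward_closed_def by auto
  moreover have "arg_min rk (\<lambda>B. B \<in> A \<and> u B x = Max ((\<lambda>B. u B x) ` A))
      = (if x \<in> W then choice T1 else choice T0)" for x
  proof -
    have "arg_min rk (\<lambda>B. B \<in> A \<and> u B x = Max ((\<lambda>B. u B x) ` A))
        = choice {B\<in>A. u B x = Max ((\<lambda>B. u B x) ` A)}"
      unfolding choice_def by simp
    moreover consider "x < xs" | "x = xs" | "xs < x" by fastforce
    ultimately show ?thesis unfolding maximizers[rule_format] using union by cases (auto simp: W_def)
  qed
  ultimately show ?thesis by blast
qed

lemma feasible_subsets_finite: "finite B \<Longrightarrow> finite {R. R \<subseteq> B \<and> P R}"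
  by (rule finite_subset[of _ "Pow B"]) auto

lemma val_fun_upd:
  fixes g :: "nat \<Rightarrow> real" and I :: "nat \<Rightarrow> nat set set" and B :: "nat set" and i j :: nat
  defines "Rs0 \<equiv> {R. R \<subseteq> B \<and> R \<in> I i \<and> j \<notin> R}" and "Rs1 \<equiv> {R. R \<subseteq> B \<and> R \<in> I i \<and> j \<in> R}"
  assumes "finite B" and "{} \<in> I i"
  shows "val I i (g(j := x)) B = (if Rs1 = {} then Max (sum g ` Rs0)
           else max (Max (sum g ` Rs0)) (Max ((\<lambda>R. sum g (R - {j})) ` Rs1) + x))"
proof -
  have fin: "finite Rs0" "finite Rs1" unfolding Rs0_def Rs1_def using assms(3) by (auto intro: feasible_subsets_finite)
  have "Rs0 \<noteq> {}" unfolding Rs0_def using assms(4) by auto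
  have "(\<lambda>R. sum (g(j := x)) R) ` Rs0 = sum g ` Rs0"
    by (intro image_cong refl sum.cong) (auto simp: Rs0_def)
  moreover have "(\<lambda>R. sum (g(j := x)) R) ` Rs1 = (\<lambda>R. sum g (R - {j}) + x) ` Rs1"
  proof (rule image_cong[OF refl])
    fix R assume "R \<in> Rs1"
    then have "finite R" "j \<in> R" using assms(3) unfolding Rs1_def by (auto intro: finite_subset)
    then show "sum (g(j := x)) R = sum g (R - {j}) + x"
      by (simp add: sum.remove[of R j] sum.cong[of "R - {j}" _ "g(j := x)" g])
  qed
  moreover have "{R. R \<subseteq> B \<and> R \<in> I i} = Rs0 \<union> Rs1" unfolding Rs0_def Rs1_def by auto
  ultimately show ?thesis
    unfolding val_def using fin \<open>Rs0 \<noteq> {}\<close>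
    by (auto simp: image_Un Max_Un Max_add_commute)
qed

lemma val_mono:
  assumes "finite B" "{} \<in> I i" "\<And>j. g j \<le> h j"
  shows "val I i g B \<le> val I i h B"
  unfolding val_def
proof (rule Max.boundedI)
  show "finite ((\<lambda>R. \<Sum>j\<in>R. g j) ` {R. R \<subseteq> B \<and> R \<in> I i})"
    using assms(1) by (auto intro: feasible_subsets_finite)
  show "(\<lambda>R. \<Sum>j\<in>R. g j) ` {R. R \<subseteq> B \<and> R \<in> I i} \<noteq> {}" using assms(2) by auto
  fix a assume "a \<in> (\<lambda>R. \<Sum>j\<in>R. g j) ` {R. R \<subseteq> B \<and> R \<in> I i}"
  then obtain R where R: "R \<subseteq> B" "R \<in> I i" "a = (\<Sum>j\<in>R. g j)" by auto
  have "a \<le> (\<Sum>j\<in>R. h j)" unfolding R(3) by (rule sum_mono) (rule assms(3))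
  also have "\<dots> \<le> Max ((\<lambda>R. \<Sum>j\<in>R. h j) ` {R. R \<subseteq> B \<and> R \<in> I i})"
    using R assms(1) by (intro Max_ge) (auto intro: feasible_subsets_finite)
  finally show "a \<le> Max ((\<lambda>R. \<Sum>j\<in>R. h j) ` {R. R \<subseteq> B \<and> R \<in> I i})" .
qed

lemma val_le_card:
  assumes "finite B" "{} \<in> I i" "\<And>j. j \<in> B \<Longrightarrow> ti j \<in> {0..H}"
  shows "val I i ti B \<le> H * real (card B)"
  unfolding val_def
proof (rule Max.boundedI)
  show "finite ((\<lambda>R. \<Sum>j\<in>R. ti j) ` {R. R \<subseteq> B \<and> R \<in> I i})"
    using assms(1) by (auto intro: feasible_subsets_finite)
  show "(\<lambda>R. \<Sum>j\<in>R. ti j) ` {R. R \<subseteq> B \<and> R \<in> I i} \<noteq> {}" using assms(2) by auto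
  fix a assume "a \<in> (\<lambda>R. \<Sum>j\<in>R. ti j) ` {R. R \<subseteq> B \<and> R \<in> I i}"
  then obtain R where R: "R \<subseteq> B" "a = (\<Sum>j\<in>R. ti j)" by auto
  have "a \<le> (\<Sum>j\<in>B. ti j)" unfolding R(2) by (rule sum_mono2[OF assms(1) R(1)]) (use assms(3) in auto)
  also have "\<dots> \<le> real (card B) * H" by (rule sum_bounded_above) (use assms(3) in auto)
  finally show "a \<le> H * real (card B)" by (simp add: mult.commute)
qed

lemma Max_util_mono:
  assumes "finite S" "{} \<in> I i" "\<And>j. g j \<le> h j"
  shows "Max (util I pr i g ` Pow S) \<le> Max (util I pr i h ` Pow S)"
proof (rule Max.boundedI)
  fix a assume "a \<in> util I pr i g ` Pow S"
  then obtain B where "B \<subseteq> S" "a = util I pr i g B" by auto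
  moreover have "finite B" using \<open>B \<subseteq> S\<close> assms(1) by (rule finite_subset)
  ultimately have "a \<le> util I pr i h B"
    unfolding util_def using val_mono[of B I i g h] assms(2,3) by simp
  also have "\<dots> \<le> Max (util I pr i h ` Pow S)" using assms(1) \<open>B \<subseteq> S\<close> by (intro Max_ge) auto
  finally show "a \<le> Max (util I pr i h ` Pow S)" .
qed (use assms(1) in auto)

lemma fav_optimal:
  assumes "finite S"
  shows "fav I pr rk i ti S \<subseteq> S" and "util I pr i ti (fav I pr rk i ti S) = Max (util I pr i ti ` Pow S)"
proof -
  define P where "P = (\<lambda>B. B \<subseteq> S \<and> util I pr i ti B = Max (util I pr i ti ` Pow S))"
  have "Max (util I pr i ti ` Pow S) \<in> util I pr i ti ` Pow S" using assms by (intro Max_in) auto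
  then obtain B where "P B" unfolding P_def by auto
  then have "P (arg_min (rk i) P)" by (rule arg_min_natI)
  moreover have "fav I pr rk i ti S = arg_min (rk i) P" unfolding fav_def P_def ..
  ultimately show "fav I pr rk i ti S \<subseteq> S" "util I pr i ti (fav I pr rk i ti S) = Max (util I pr i ti ` Pow S)"
    unfolding P_def by simp_all
qed

lemma fav_fun_upd_threshold:
  fixes g :: "nat \<Rightarrow> real"
  assumes "finite S" "{} \<in> I i" "inj_on (rk i) (Pow S)"
  shows "\<exists>W b0 b1. upward_closed W \<and> (\<forall>x. fav I pr rk i (g(j := x)) S = (if x \<in> W then b1 else b0))"
proof -
  define Rs0 where "Rs0 B = {R. R \<subseteq> B \<and> R \<in> I i \<and> j \<notin> R}" for B
  define Rs1 where "Rs1 B = {R. R \<subseteq> B \<and> R \<in> I i \<and> j \<in> R}" for B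
  define \<alpha> where "\<alpha> B = Max (sum g ` Rs0 B) - (\<Sum>j\<in>B. pr i j)" for B
  define \<beta> where "\<beta> B = Max ((\<lambda>R. sum g (R - {j})) ` Rs1 B) - (\<Sum>j\<in>B. pr i j)" for B
  have "util I pr i (g(j := x)) B = (if Rs1 B \<noteq> {} then max (\<alpha> B) (\<beta> B + x) else \<alpha> B)"
    if "B \<in> Pow S" for B x
  proof -
    have "finite B" using that assms(1) by (auto intro: finite_subset)
    then show ?thesis using val_fun_upd[of B I i g j x] assms(2)
      unfolding util_def \<alpha>_def \<beta>_def Rs0_def Rs1_def by (auto simp: max_def)
  qed
  then have "\<exists>W b0 b1. upward_closed W \<and> (\<forall>x. arg_min (rk i) (\<lambda>B. B \<in> Pow S \<and>
      util I pr i (g(j := x)) B = Max ((\<lambda>B. util I pr i (g(j := x)) B) ` Pow S)) = (if x \<in> W then b1 else b0))"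
    using assms by (intro arg_min_argmax_threshold[where u = "\<lambda>B x. util I pr i (g(j := x)) B"]) auto
  moreover have "fav I pr rk i (g(j := x)) S = arg_min (rk i) (\<lambda>B. B \<in> Pow S \<and>
      util I pr i (g(j := x)) B = Max ((\<lambda>B. util I pr i (g(j := x)) B) ` Pow S))" for x
    unfolding fav_def by (simp add: Pow_def)
  ultimately show ?thesis by simp
qed

definition spem_step :: "(nat \<Rightarrow> nat set set) \<Rightarrow> (nat \<Rightarrow> nat \<Rightarrow> real) \<Rightarrow> (nat \<Rightarrow> nat set \<Rightarrow> real)
    \<Rightarrow> (nat \<Rightarrow> nat set \<Rightarrow> nat) \<Rightarrow> nat \<Rightarrow> (nat \<Rightarrow> real) \<Rightarrow> nat set \<times> real \<Rightarrow> nat set \<times> real" where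
  "spem_step I pr \<delta> rk i ti = (\<lambda>(S, r).
     let B = fav I pr rk i ti S
     in if util I pr i ti B \<ge> \<delta> i S then (S - B, r + \<delta> i S + (\<Sum>j\<in>B. pr i j)) else (S, r))"

lemma spem_run_Suc:
  "spem_run m I pr \<delta> rk t (Suc i) = spem_step I pr \<delta> rk i (\<lambda>j. t (i, j)) (spem_run m I pr \<delta> rk t i)"
  by (simp add: spem_step_def case_prod_unfold Let_def)

lemma spem_step_fun_upd_threshold:
  fixes g :: "nat \<Rightarrow> real"
  assumes "finite S" "{} \<in> I i" "inj_on (rk i) (Pow S)"
  shows "\<exists>U1 U2 s0 s1 s2. upward_closed U1 \<and> upward_closed U2 \<and> U2 \<subseteq> U1 \<and>
     (\<forall>x. spem_step I pr \<delta> rk i (g(j := x)) (S, r) = (if x \<in> U2 then s2 else if x \<in> U1 then s1 else s0))"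
proof -
  obtain W b0 b1 where "upward_closed W" and fav: "\<And>x. fav I pr rk i (g(j := x)) S = (if x \<in> W then b1 else b0)"
    using fav_fun_upd_threshold[where I = I and i = i and rk = rk and g = g and j = j and pr = pr, OF assms]
    by blast
  define E where "E = {x. \<delta> i S \<le> Max (util I pr i (g(j := x)) ` Pow S)}"
  have "upward_closed E"
    unfolding upward_closed_def E_def
  proof (intro ballI allI impI, unfold mem_Collect_eq)
    fix x y :: real assume entry: "\<delta> i S \<le> Max (util I pr i (g(j := x)) ` Pow S)" and "x \<le> y"
    have "Max (util I pr i (g(j := x)) ` Pow S) \<le> Max (util I pr i (g(j := y)) ` Pow S)"
      by (rule Max_util_mono[where I = I and i = i, OF assms(1,2)]) (use \<open>x \<le> y\<close> in simp)
    with entry show "\<delta> i S \<le> Max (util I pr i (g(j := y)) ` Pow S)" by (rule order_trans)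
  qed
  define sold where "sold B = (S - B, r + \<delta> i S + (\<Sum>j\<in>B. pr i j))" for B
  have "spem_step I pr \<delta> rk i (g(j := x)) (S, r) = (if x \<in> E then sold (fav I pr rk i (g(j := x)) S) else (S, r))" for x
    unfolding spem_step_def sold_def E_def Let_def using fav_optimal(2)[OF assms(1)] by simp
  then have "spem_step I pr \<delta> rk i (g(j := x)) (S, r)
      = (if x \<in> E \<inter> W then sold b1 else if x \<in> E then sold b0 else (S, r))" for x
    using fav by simp
  moreover have "upward_closed (E \<inter> W)" using \<open>upward_closed E\<close> \<open>upward_closed W\<close> by (rule upward_closed_Int)
  ultimately show ?thesis using \<open>upward_closed E\<close> by blast
qed

lemma spem_run_cong_prefix:
  "(\<And>i j. i < l \<Longrightarrow> t (i, j) = t' (i, j)) \<Longrightarrow> spem_run m I pr \<delta> rk t l = spem_run m I pr \<delta> rk t' l"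
  by (induction l) (simp_all add: spem_run_Suc)

lemma spem_run_cong_suffix:
  assumes "spem_run m I pr \<delta> rk t l0 = spem_run m I pr \<delta> rk t' l0"
    and "\<And>i j. l0 \<le> i \<Longrightarrow> t (i, j) = t' (i, j)" and "l0 \<le> l"
  shows "spem_run m I pr \<delta> rk t l = spem_run m I pr \<delta> rk t' l"
  using assms(3) by (induction l rule: dec_induct) (simp_all add: assms(1,2) spem_run_Suc)

lemma spem_run_available_subset: "fst (spem_run m I pr \<delta> rk t l) \<subseteq> {..<m}"
  by (induction l) (auto simp: spem_run_Suc spem_step_def Let_def split: prod.splits)

lemma spem_run_revenue_le_items_sold:
  assumes prices: "\<forall>i<n. \<forall>j<m. pr i j \<ge> 0"
    and fees: "\<forall>i<n. \<forall>S. S \<subseteq> {..<m} \<longrightarrow> \<delta> i S \<ge> 0"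
    and empty: "\<forall>i<n. {} \<in> I i"
    and types: "\<forall>i<n. \<forall>j<m. t (i, j) \<in> {0..H}" and "l \<le> n"
  shows "0 \<le> snd (spem_run m I pr \<delta> rk t l) \<and>
    snd (spem_run m I pr \<delta> rk t l) \<le> H * (real m - real (card (fst (spem_run m I pr \<delta> rk t l))))"
  using \<open>l \<le> n\<close>
proof (induction l)
  case (Suc l)
  obtain S r where run: "spem_run m I pr \<delta> rk t l = (S, r)" by fastforce
  have "S \<subseteq> {..<m}" using spem_run_available_subset[of m I pr \<delta> rk t l] run by simp
  then have "finite S" by (rule finite_subset) simp
  have IH: "0 \<le> r" "r \<le> H * (real m - real (card S))" using Suc run by auto
  define ti where "ti = (\<lambda>j. t (l, j))"
  define B where "B = fav I pr rk l ti S"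
  have "B \<subseteq> S" unfolding B_def by (rule fav_optimal(1)[OF \<open>finite S\<close>])
  then have "finite B" using \<open>finite S\<close> by (rule finite_subset)
  have step: "spem_run m I pr \<delta> rk t (Suc l) =
      (if util I pr l ti B \<ge> \<delta> l S then (S - B, r + \<delta> l S + (\<Sum>j\<in>B. pr l j)) else (S, r))"
    unfolding spem_run_Suc run spem_step_def Let_def B_def ti_def by simp
  show ?case
  proof (cases "util I pr l ti B \<ge> \<delta> l S")
    case True
    have "0 \<le> \<delta> l S" using fees Suc.prems \<open>S \<subseteq> {..<m}\<close> by auto
    moreover have "0 \<le> (\<Sum>j\<in>B. pr l j)"
      using prices Suc.prems \<open>B \<subseteq> S\<close> \<open>S \<subseteq> {..<m}\<close> by (intro sum_nonneg) auto
    moreover have "val I l ti B \<le> H * real (card B)"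
      using empty types Suc.prems \<open>B \<subseteq> S\<close> \<open>S \<subseteq> {..<m}\<close> unfolding ti_def
      by (intro val_le_card[OF \<open>finite B\<close>]) auto
    moreover have "H * real (card (S - B)) = H * real (card S) - H * real (card B)"
      using card_Diff_subset[OF \<open>finite B\<close> \<open>B \<subseteq> S\<close>] card_mono[OF \<open>finite S\<close> \<open>B \<subseteq> S\<close>]
      by (simp add: right_diff_distrib[symmetric] of_nat_diff)
    ultimately show ?thesis
      using True IH unfolding step util_def by (simp add: algebra_simps)
  qed (use step IH in simp)
qed simp

lemma spem_rev_bounded:
  assumes prices: "\<forall>i<n. \<forall>j<m. pr i j \<ge> 0"
    and fees: "\<forall>i<n. \<forall>S. S \<subseteq> {..<m} \<longrightarrow> \<delta> i S \<ge> 0"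
    and empty: "\<forall>i<n. {} \<in> I i"
    and types: "\<forall>i<n. \<forall>j<m. t (i, j) \<in> {0..H}" and "0 \<le> H"
  shows "spem_rev n m I pr \<delta> rk t \<in> {0..real m * H}"
proof -
  have "H * (real m - real (card (fst (spem_run m I pr \<delta> rk t n)))) \<le> real m * H"
    using \<open>0 \<le> H\<close> by (simp add: algebra_simps)
  moreover have "0 \<le> snd (spem_run m I pr \<delta> rk t n)"
    and "snd (spem_run m I pr \<delta> rk t n) \<le> H * (real m - real (card (fst (spem_run m I pr \<delta> rk t n))))"
    using spem_run_revenue_le_items_sold[OF prices fees empty types order.refl] by auto
  ultimately show ?thesis unfolding spem_rev_def by simp
qed

lemma spem_run_fun_upd_threshold:
  assumes "{} \<in> I i" "inj_on (rk i) (Pow {..<m})"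
  shows "\<exists>U1 U2 s0 s1 s2. upward_closed U1 \<and> upward_closed U2 \<and> U2 \<subseteq> U1 \<and>
    (\<forall>x. spem_run m I pr \<delta> rk (t((i, j) := x)) (Suc i) = (if x \<in> U2 then s2 else if x \<in> U1 then s1 else s0))"
proof -
  obtain S r where run: "spem_run m I pr \<delta> rk t i = (S, r)" by fastforce
  have "S \<subseteq> {..<m}" using spem_run_available_subset[of m I pr \<delta> rk t i] run by simp
  then have "finite S" by (rule finite_subset) simp
  have "inj_on (rk i) (Pow S)" using assms(2) \<open>S \<subseteq> {..<m}\<close> by (meson Pow_mono inj_on_subset)
  have "spem_run m I pr \<delta> rk (t((i, j) := x)) (Suc i) = spem_step I pr \<delta> rk i ((\<lambda>j. t (i, j))(j := x)) (S, r)" for x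
  proof -
    have "spem_run m I pr \<delta> rk (t((i, j) := x)) i = (S, r)"
      unfolding run[symmetric] by (rule spem_run_cong_prefix) auto
    moreover have "(\<lambda>j'. (t((i, j) := x)) (i, j')) = (\<lambda>j. t (i, j))(j := x)" by auto
    ultimately show ?thesis unfolding spem_run_Suc by simp
  qed
  then show ?thesis
    using spem_step_fun_upd_threshold[where I = I and i = i and rk = rk and g = "\<lambda>j. t (i, j)" and j = j
      and pr = pr and \<delta> = \<delta> and r = r, OF \<open>finite S\<close> assms(1) \<open>inj_on (rk i) (Pow S)\<close>]
    by simp
qed

text \<open>Only stage i of the run sees the value x, and it has at most three outcomes on nested
  upward-closed sets; the later stages turn each outcome into a fixed revenue.\<close>
lemma spem_rev_two_step:
  assumes cadd: "\<forall>i<n. constrained_family m (I i)"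
    and prices: "\<forall>i<n. \<forall>j<m. pr i j \<ge> 0"
    and fees: "\<forall>i<n. \<forall>S. S \<subseteq> {..<m} \<longrightarrow> \<delta> i S \<ge> 0"
    and ties: "\<forall>i<n. inj_on (rk i) (Pow {..<m})"
    and "0 \<le> H" and k: "k \<in> {..<n} \<times> {..<m}"
    and types: "\<And>k'. k' \<in> {..<n} \<times> {..<m} - {k} \<Longrightarrow> t k' \<in> {0..H}"
  shows "two_step_on {0..H} (real m * H) (\<lambda>x. spem_rev n m I pr \<delta> rk (t(k := x)))"
proof -
  obtain i j where k_def: "k = (i, j)" and "i < n" "j < m" using k by auto
  have empty: "\<forall>i<n. {} \<in> I i" using cadd unfolding constrained_family_def by auto
  have "{} \<in> I i" "inj_on (rk i) (Pow {..<m})" using empty ties \<open>i < n\<close> by auto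
  from spem_run_fun_upd_threshold[where I = I and i = i and rk = rk and m = m and pr = pr and \<delta> = \<delta>
      and t = t and j = j, OF this]
  obtain U1 U2 s0 s1 s2 where U: "upward_closed U1" "upward_closed U2" "U2 \<subseteq> U1"
    and run: "\<forall>x. spem_run m I pr \<delta> rk (t(k := x)) (Suc i) = (if x \<in> U2 then s2 else if x \<in> U1 then s1 else s0)"
    unfolding k_def by blast
  define state where "state x = spem_run m I pr \<delta> rk (t(k := x)) (Suc i)" for x
  have rev_state: "spem_rev n m I pr \<delta> rk (t(k := x)) = spem_rev n m I pr \<delta> rk (t(k := y))"
    if "state x = state y" for x y
    unfolding spem_rev_def using that \<open>i < n\<close> unfolding state_def
    by (subst spem_run_cong_suffix[of m I pr \<delta> rk "t(k := x)" "Suc i" "t(k := y)"]) (auto simp: k_def)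
  define F where "F s = spem_rev n m I pr \<delta> rk (t(k := SOME y. state y = s))" for s
  show ?thesis
  proof (rule two_step_onI[OF U])
    show "0 \<le> real m * H" using \<open>0 \<le> H\<close> by simp
    show "spem_rev n m I pr \<delta> rk (t(k := x)) = F (if x \<in> U2 then s2 else if x \<in> U1 then s1 else s0)" for x
    proof -
      have "state (SOME y. state y = state x) = state x" by (rule someI) (rule refl)
      then show ?thesis unfolding F_def run[rule_format, symmetric] state_def[symmetric]
        by (intro rev_state) simp
    qed
    show "spem_rev n m I pr \<delta> rk (t(k := x)) \<in> {0..real m * H}" if "x \<in> {0..H}" for x
      using types that \<open>0 \<le> H\<close> by (intro spem_rev_bounded[OF prices fees empty]) (auto simp: k_def)
  qed
qed

section \<open>Measurability of the revenue\<close>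

lemma fav_eq_iff:
  assumes "finite S" "inj_on (rk i) (Pow S)" "B \<subseteq> S"
  shows "fav I pr rk i ti S = B \<longleftrightarrow> util I pr i ti B = Max (util I pr i ti ` Pow S) \<and>
     (\<forall>B'\<in>Pow S. util I pr i ti B' = Max (util I pr i ti ` Pow S) \<longrightarrow> rk i B \<le> rk i B')"
proof -
  define T where "T = {B\<in>Pow S. util I pr i ti B = Max (util I pr i ti ` Pow S)}"
  have fav: "fav I pr rk i ti S = arg_min (rk i) (\<lambda>B. B \<in> T)"
    unfolding fav_def T_def by (simp add: Pow_def)
  have "fav I pr rk i ti S \<in> T" using fav_optimal[OF assms(1)] unfolding T_def by auto
  have "fav I pr rk i ti S = B \<longleftrightarrow> B \<in> T \<and> (\<forall>B'\<in>T. rk i B \<le> rk i B')"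
  proof
    assume "fav I pr rk i ti S = B"
    then show "B \<in> T \<and> (\<forall>B'\<in>T. rk i B \<le> rk i B')"
      using \<open>fav I pr rk i ti S \<in> T\<close> arg_min_nat_le[of "\<lambda>B. B \<in> T" _ "rk i"] unfolding fav by auto
  next
    assume "B \<in> T \<and> (\<forall>B'\<in>T. rk i B \<le> rk i B')"
    moreover have "inj_on (rk i) {B. B \<in> T}" using assms(2) unfolding T_def by (auto intro: inj_on_subset)
    ultimately show "fav I pr rk i ti S = B" unfolding fav by (intro arg_min_inj_eq) auto
  qed
  then show ?thesis using assms(3) unfolding T_def by auto
qed

context
  fixes n m :: nat and M :: "nat \<times> nat \<Rightarrow> real measure"
  assumes sets_M: "\<And>k. k \<in> {..<n} \<times> {..<m} \<Longrightarrow> sets (M k) = sets borel"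
begin

abbreviation "Prof \<equiv> PiM ({..<n} \<times> {..<m}) M"

lemma borel_measurable_coord:
  assumes "i < n" "j < m"
  shows "(\<lambda>t. t (i, j)) \<in> borel_measurable Prof"
proof -
  have "(\<lambda>t. t (i, j)) \<in> measurable Prof (M (i, j))"
    using assms by (intro measurable_component_singleton) auto
  then show ?thesis using measurable_cong_sets[OF refl sets_M[of "(i, j)"], of Prof] assms by simp
qed

lemma borel_measurable_util:
  assumes "i < n" "B \<subseteq> {..<m}"
  shows "(\<lambda>t. util I pr i (\<lambda>j. t (i, j)) B) \<in> borel_measurable Prof"
  unfolding util_def val_def
proof (intro borel_measurable_diff borel_measurable_Max borel_measurable_const)
  show "finite {R. R \<subseteq> B \<and> R \<in> I i}"
    using assms(2) by (intro feasible_subsets_finite) (auto intro: finite_subset)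
  show "(\<lambda>t. \<Sum>j\<in>R. t (i, j)) \<in> borel_measurable Prof" if "R \<in> {R. R \<subseteq> B \<and> R \<in> I i}" for R
    using that assms by (intro borel_measurable_sum borel_measurable_coord) auto
qed

lemma borel_measurable_Max_util:
  "i < n \<Longrightarrow> S \<subseteq> {..<m} \<Longrightarrow> (\<lambda>t. Max ((\<lambda>B. util I pr i (\<lambda>j. t (i, j)) B) ` Pow S)) \<in> borel_measurable Prof"
  by (rule borel_measurable_Max) (auto intro: borel_measurable_util finite_subset)

lemma measurable_fav:
  assumes "i < n" "S \<subseteq> {..<m}" "inj_on (rk i) (Pow S)"
  shows "(\<lambda>t. fav I pr rk i (\<lambda>j. t (i, j)) S) \<in> measurable Prof (count_space (Pow S))"
proof -
  have "finite S" using assms(2) by (rule finite_subset) simp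
  have optimal: "Measurable.pred Prof
      (\<lambda>t. util I pr i (\<lambda>j. t (i, j)) B = Max ((\<lambda>B. util I pr i (\<lambda>j. t (i, j)) B) ` Pow S))"
    if "B \<in> Pow S" for B
  proof -
    have "(\<lambda>t. util I pr i (\<lambda>j. t (i, j)) B) \<in> borel_measurable Prof"
      using that assms(2) by (intro borel_measurable_util[OF assms(1)]) auto
    moreover note borel_measurable_Max_util[OF assms(1,2)]
    ultimately have "{t \<in> space Prof. util I pr i (\<lambda>j. t (i, j)) B
        = Max ((\<lambda>B. util I pr i (\<lambda>j. t (i, j)) B) ` Pow S)} \<in> sets Prof"
      by measurable
    then show ?thesis unfolding pred_def .
  qed
  have "(\<lambda>t. fav I pr rk i (\<lambda>j. t (i, j)) S) -` {B} \<inter> space Prof \<in> sets Prof" if "B \<in> Pow S" for B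
  proof -
    have "Measurable.pred Prof (\<lambda>t. util I pr i (\<lambda>j. t (i, j)) B
        = Max ((\<lambda>B. util I pr i (\<lambda>j. t (i, j)) B) ` Pow S) \<and>
        (\<forall>B'\<in>Pow S. util I pr i (\<lambda>j. t (i, j)) B' = Max ((\<lambda>B. util I pr i (\<lambda>j. t (i, j)) B) ` Pow S)
          \<longrightarrow> rk i B \<le> rk i B'))"
      using that \<open>finite S\<close> by (intro pred_intros_logic pred_intros_finite optimal) auto
    moreover have "(\<lambda>t. fav I pr rk i (\<lambda>j. t (i, j)) S) -` {B} \<inter> space Prof =
      {t \<in> space Prof. util I pr i (\<lambda>j. t (i, j)) B = Max ((\<lambda>B. util I pr i (\<lambda>j. t (i, j)) B) ` Pow S) \<and>
        (\<forall>B'\<in>Pow S. util I pr i (\<lambda>j. t (i, j)) B' = Max ((\<lambda>B. util I pr i (\<lambda>j. t (i, j)) B) ` Pow S)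
          \<longrightarrow> rk i B \<le> rk i B')}"
      using fav_eq_iff[where rk = rk and i = i and I = I and pr = pr and B = B, OF \<open>finite S\<close> assms(3)] that
      by auto
    ultimately show ?thesis unfolding pred_def by simp
  qed
  moreover have "(\<lambda>t. fav I pr rk i (\<lambda>j. t (i, j)) S) \<in> space Prof \<rightarrow> Pow S"
    using fav_optimal(1)[OF \<open>finite S\<close>] by auto
  ultimately show ?thesis using \<open>finite S\<close> by (simp add: measurable_count_space_eq2)
qed

lemma measurable_spem_step:
  assumes "l < n" "S \<subseteq> {..<m}" "inj_on (rk l) (Pow S)" and r: "r \<in> borel_measurable Prof"
  shows "(\<lambda>t. fst (spem_step I pr \<delta> rk l (\<lambda>j. t (l, j)) (S, r t))) \<in> measurable Prof (count_space (Pow {..<m}))"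
    and "(\<lambda>t. snd (spem_step I pr \<delta> rk l (\<lambda>j. t (l, j)) (S, r t))) \<in> borel_measurable Prof"
proof -
  have "countable (Pow S)" using assms(2) by (simp add: countable_finite finite_subset)
  note fav = measurable_fav[where rk = rk and i = l and I = I and pr = pr, OF assms(1-3)]
  define entry where "entry B t \<longleftrightarrow> \<delta> l S \<le> util I pr l (\<lambda>j. t (l, j)) B" for B t
  have entry_sets: "{t \<in> space Prof. entry B t} \<in> sets Prof" if "B \<in> Pow S" for B
  proof -
    have "(\<lambda>t. util I pr l (\<lambda>j. t (l, j)) B) \<in> borel_measurable Prof"
      using that assms(2) by (intro borel_measurable_util[OF assms(1)]) auto
    then show ?thesis unfolding entry_def by measurable
  qed
  define sold where "sold B t = (if entry B t then S - B else S)" for B t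
  define paid where "paid B t = (if entry B t then r t + \<delta> l S + (\<Sum>j\<in>B. pr l j) else r t)" for B t
  have sold: "sold B \<in> measurable Prof (count_space (Pow {..<m}))"
    and paid: "paid B \<in> borel_measurable Prof" if "B \<in> Pow S" for B
    using entry_sets[OF that] that assms(2) r
    unfolding sold_def paid_def by (auto intro!: measurable_If measurable_const)
  have "fst (spem_step I pr \<delta> rk l (\<lambda>j. t (l, j)) (S, r t)) = sold (fav I pr rk l (\<lambda>j. t (l, j)) S) t"
    and "snd (spem_step I pr \<delta> rk l (\<lambda>j. t (l, j)) (S, r t)) = paid (fav I pr rk l (\<lambda>j. t (l, j)) S) t" for t
    unfolding spem_step_def Let_def sold_def paid_def entry_def by simp_all
  moreover have "(\<lambda>t. sold (fav I pr rk l (\<lambda>j. t (l, j)) S) t) \<in> measurable Prof (count_space (Pow {..<m}))"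
    by (rule measurable_compose_countable'[OF sold fav \<open>countable (Pow S)\<close>])
  moreover have "(\<lambda>t. paid (fav I pr rk l (\<lambda>j. t (l, j)) S) t) \<in> borel_measurable Prof"
    by (rule measurable_compose_countable'[OF paid fav \<open>countable (Pow S)\<close>])
  ultimately show "(\<lambda>t. fst (spem_step I pr \<delta> rk l (\<lambda>j. t (l, j)) (S, r t))) \<in> measurable Prof (count_space (Pow {..<m}))"
    and "(\<lambda>t. snd (spem_step I pr \<delta> rk l (\<lambda>j. t (l, j)) (S, r t))) \<in> borel_measurable Prof"
    by simp_all
qed

lemma measurable_spem_run:
  assumes ties: "\<forall>i<n. inj_on (rk i) (Pow {..<m})" and "l \<le> n"
  shows "(\<lambda>t. fst (spem_run m I pr \<delta> rk t l)) \<in> measurable Prof (count_space (Pow {..<m})) \<and>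
    (\<lambda>t. snd (spem_run m I pr \<delta> rk t l)) \<in> borel_measurable Prof"
  using \<open>l \<le> n\<close>
proof (induction l)
  case (Suc l)
  then have "l < n" by simp
  have available: "(\<lambda>t. fst (spem_run m I pr \<delta> rk t l)) \<in> measurable Prof (count_space (Pow {..<m}))"
    and revenue: "(\<lambda>t. snd (spem_run m I pr \<delta> rk t l)) \<in> borel_measurable Prof"
    using Suc by auto
  define after where
    "after S t = spem_step I pr \<delta> rk l (\<lambda>j. t (l, j)) (S, snd (spem_run m I pr \<delta> rk t l))" for S t
  have after_fst: "(\<lambda>t. fst (after S t)) \<in> measurable Prof (count_space (Pow {..<m}))"
    and after_snd: "(\<lambda>t. snd (after S t)) \<in> borel_measurable Prof" if "S \<in> Pow {..<m}" for S
  proof -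
    have "inj_on (rk l) (Pow S)" using ties \<open>l < n\<close> that by (meson PowD Pow_mono inj_on_subset)
    then show "(\<lambda>t. fst (after S t)) \<in> measurable Prof (count_space (Pow {..<m}))"
      and "(\<lambda>t. snd (after S t)) \<in> borel_measurable Prof"
      unfolding after_def using measurable_spem_step[OF \<open>l < n\<close> _ _ revenue] that by auto
  qed
  have step: "spem_run m I pr \<delta> rk t (Suc l) = after (fst (spem_run m I pr \<delta> rk t l)) t" for t
    unfolding after_def spem_run_Suc by simp
  show ?case
    unfolding step using measurable_compose_countable'[OF after_fst available]
      measurable_compose_countable'[OF after_snd available]
    by (simp add: countable_finite)
qed simp

lemma borel_measurable_spem_rev:
  "\<forall>i<n. inj_on (rk i) (Pow {..<m}) \<Longrightarrow> spem_rev n m I pr \<delta> rk \<in> borel_measurable Prof"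
  unfolding spem_rev_def using measurable_spem_run[of rk n] by simp

end

section \<open>Payments of BIC and IR mechanisms\<close>

text \<open>The point mass outside the grid makes every coordinate a probability measure, as the
  lemmas on product measures require; prof only uses the coordinates in the grid.\<close>
definition profile_coord :: "nat \<Rightarrow> nat \<Rightarrow> (nat \<Rightarrow> nat \<Rightarrow> real measure) \<Rightarrow> nat \<times> nat \<Rightarrow> real measure" where
  "profile_coord n m D k = (if k \<in> {..<n} \<times> {..<m} then D (fst k) (snd k) else return borel 0)"

lemma prof_eq_PiM_profile_coord: "prof n m D = PiM ({..<n} \<times> {..<m}) (profile_coord n m D)"
  unfolding prof_def profile_coord_def by (rule PiM_cong) auto

lemma profile_coord:
  assumes "\<forall>i<n. \<forall>j<m. prob_space (D i j) \<and> sets (D i j) = sets borel \<and> measure (D i j) {0..H} = 1"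
  shows "prob_space (profile_coord n m D k)" and "sets (profile_coord n m D k) = sets borel"
    and "k \<in> {..<n} \<times> {..<m} \<Longrightarrow> AE x in profile_coord n m D k. x \<in> {0..H}"
proof -
  show "prob_space (profile_coord n m D k)" "sets (profile_coord n m D k) = sets borel"
    using assms by (auto simp: profile_coord_def prob_space_return)
  assume "k \<in> {..<n} \<times> {..<m}"
  then obtain i j where "k = (i, j)" "i < n" "j < m" by auto
  then have "profile_coord n m D k = D i j" by (simp add: profile_coord_def)
  then show "AE x in profile_coord n m D k. x \<in> {0..H}"
    using assms \<open>i < n\<close> \<open>j < m\<close> by (simp only:) (intro prob_space.AE_prob_1, auto)
qed

lemma prob_space_prof:
  "\<forall>i<n. \<forall>j<m. prob_space (D i j) \<and> sets (D i j) = sets borel \<and> measure (D i j) {0..H} = 1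
    \<Longrightarrow> prob_space (prof n m D)"
  unfolding prof_eq_PiM_profile_coord by (intro prob_space_PiM profile_coord(1))

lemma BIC_IR_mech_null:
  assumes "\<forall>i<n. constrained_family m (I i)" "prob_space (prof n m D)"
  shows "BIC_IR_mech n m H I D (\<lambda>t. return_pmf (\<lambda>_. {})) (\<lambda>_ _. 0)"
proof -
  have "val I i ti {} = 0" if "i < n" for i ti
  proof -
    have "{R. R \<subseteq> {} \<and> R \<in> I i} = {{}}" using assms(1) that unfolding constrained_family_def by auto
    then show ?thesis unfolding val_def by simp
  qed
  then show ?thesis
    using assms(2) unfolding BIC_IR_mech_def well_defined_mech_def feasible_alloc_def interim_util_def
    by (auto simp: prob_space.finite_measure finite_measure.integrable_const)
qed

lemma interim_payment_le:
  assumes cadd: "\<forall>i<n. constrained_family m (I i)" and prob: "prob_space (prof n m D)"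
    and BIC: "BIC_IR_mech n m H I D x p" and "i < n" "in_box m H s" "0 \<le> H"
  shows "(\<integral>t. p i (upd_bidder m t i s) \<partial>prof n m D) \<le> real m * H"
proof -
  interpret prob_space "prof n m D" by (rule prob)
  define worth where "worth t = measure_pmf.expectation (x (upd_bidder m t i s)) (\<lambda>A. val I i s (A i))" for t
  have wd: "well_defined_mech n m H I D x p" using BIC unfolding BIC_IR_mech_def by blast
  then have int: "integrable (prof n m D) (\<lambda>t. p i (upd_bidder m t i s))" "integrable (prof n m D) worth"
    using \<open>i < n\<close> \<open>in_box m H s\<close> unfolding well_defined_mech_def worth_def by blast+
  have "0 \<le> interim_util n m I D x p i s s"
    using BIC \<open>i < n\<close> \<open>in_box m H s\<close> unfolding BIC_IR_mech_def by blast
  then have "(\<integral>t. p i (upd_bidder m t i s) \<partial>prof n m D) \<le> (\<integral>t. worth t \<partial>prof n m D)"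
    unfolding interim_util_def worth_def[symmetric] using int by simp
  also have "\<dots> \<le> real m * H"
  proof (rule integral_le_const[OF int(2)], rule AE_I2)
    fix t
    have "val I i s (A i) \<le> real m * H" if "A \<in> set_pmf (x (upd_bidder m t i s))" for A
    proof -
      have "A i \<subseteq> {..<m}"
        using wd that \<open>i < n\<close> unfolding well_defined_mech_def feasible_alloc_def by blast
      moreover have "{} \<in> I i" using cadd \<open>i < n\<close> unfolding constrained_family_def by blast
      ultimately have "val I i s (A i) \<le> H * real (card (A i))"
        using \<open>in_box m H s\<close> unfolding in_box_def by (intro val_le_card) (auto intro: finite_subset)
      also have "\<dots> \<le> H * real m"
        using card_mono[OF _ \<open>A i \<subseteq> {..<m}\<close>] \<open>0 \<le> H\<close> by (simp add: mult_left_mono)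
      finally show ?thesis by (simp add: mult.commute)
    qed
    then have "worth t \<le> measure_pmf.expectation (x (upd_bidder m t i s)) (\<lambda>_. real m * H)"
      unfolding worth_def using \<open>0 \<le> H\<close>
      by (intro integral_mono_AE') (simp_all add: AE_measure_pmf_iff)
    then show "worth t \<le> real m * H" by simp
  qed
  finally show ?thesis .
qed

lemma expected_payment_le:
  assumes cadd: "\<forall>i<n. constrained_family m (I i)"
    and D: "\<forall>i<n. \<forall>j<m. prob_space (D i j) \<and> sets (D i j) = sets borel \<and> measure (D i j) {0..H} = 1"
    and BIC: "BIC_IR_mech n m H I D x p" and "i < n" "0 \<le> H"
  shows "integral\<^sup>L (prof n m D) (p i) \<le> real m * H"
proof -
  define Ki where "Ki = {i} \<times> {..<m}"
  define Kr where "Kr = {..<n} \<times> {..<m} - Ki"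
  let ?M = "profile_coord n m D"
  interpret product_sigma_finite ?M
    using profile_coord(1)[OF D] by (simp add: product_sigma_finite_def prob_space_imp_sigma_finite)
  have "Ki \<inter> Kr = {}" "finite Ki" "finite Kr" unfolding Kr_def Ki_def by auto
  have "{..<n} \<times> {..<m} = Ki \<union> Kr" unfolding Kr_def Ki_def using \<open>i < n\<close> by auto
  then have prof: "prof n m D = PiM (Ki \<union> Kr) ?M" unfolding prof_eq_PiM_profile_coord by simp
  note fold = product_integral_fold[OF \<open>Ki \<inter> Kr = {}\<close> \<open>finite Ki\<close> \<open>finite Kr\<close>, folded prof]
  have wd: "well_defined_mech n m H I D x p" using BIC unfolding BIC_IR_mech_def by blast
  define \<Phi> where "\<Phi> y = (\<integral>z. p i (merge Ki Kr (y, z)) \<partial>PiM Kr ?M)" for y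
  have "integral\<^sup>L (prof n m D) (p i) = integral\<^sup>L (PiM Ki ?M) \<Phi>"
    unfolding \<Phi>_def using wd \<open>i < n\<close> unfolding well_defined_mech_def by (intro fold) blast
  also have "\<dots> \<le> real m * H"
  proof (rule integral_mono_AE'[where f = "\<lambda>_. real m * H", THEN order_trans])
    have "AE y in PiM Ki ?M. \<forall>k\<in>Ki. y k \<in> {0..H}"
      using \<open>finite Ki\<close> profile_coord(1,3)[OF D] \<open>i < n\<close> unfolding Ki_def by (intro AE_PiM_all_in) auto
    then show "AE y in PiM Ki ?M. \<Phi> y \<le> real m * H"
    proof eventually_elim
      case (elim y)
      define s where "s j = y (i, j)" for j
      have "in_box m H s" using elim unfolding in_box_def s_def Ki_def by auto
      have "upd_bidder m (merge Ki Kr (y', z)) i s = merge Ki Kr (y, z)" for y' z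
        unfolding upd_bidder_def merge_def s_def Kr_def Ki_def by (auto simp: fun_eq_iff)
      then have "(\<integral>t. p i (upd_bidder m t i s) \<partial>prof n m D) = (\<integral>y'. \<Phi> y \<partial>PiM Ki ?M)"
        unfolding \<Phi>_def using wd \<open>i < n\<close> \<open>in_box m H s\<close> unfolding well_defined_mech_def by (subst fold) auto
      also have "\<dots> = \<Phi> y"
        using prob_space_PiM[of Ki ?M] profile_coord(1)[OF D] by (simp add: prob_space.prob_space)
      finally show ?case
        using interim_payment_le[OF cadd prob_space_prof[OF D] BIC \<open>i < n\<close> \<open>in_box m H s\<close> \<open>0 \<le> H\<close>] by simp
    qed
  qed (use \<open>0 \<le> H\<close> prob_space_PiM[of Ki ?M] profile_coord(1)[OF D] in
       \<open>auto simp: prob_space.prob_space finite_measure.integrable_const prob_space.finite_measure\<close>)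
  finally show ?thesis .
qed

lemma OPT_nonneg:
  assumes cadd: "\<forall>i<n. constrained_family m (I i)"
    and D: "\<forall>i<n. \<forall>j<m. prob_space (D i j) \<and> sets (D i j) = sets borel \<and> measure (D i j) {0..H} = 1"
    and "0 \<le> H"
  shows "0 \<le> OPT n m H I D"
proof -
  define revenues where "revenues = {mech_rev n m D p | x p. BIC_IR_mech n m H I D x p}"
  have "0 \<in> revenues"
    unfolding revenues_def mech_rev_def using BIC_IR_mech_null[OF cadd prob_space_prof[OF D], of H] by force
  moreover have "bdd_above revenues"
  proof (rule bdd_aboveI)
    fix v assume "v \<in> revenues"
    then obtain x p where v: "v = mech_rev n m D p" and BIC: "BIC_IR_mech n m H I D x p"
      unfolding revenues_def by auto
    have "v = (\<Sum>i<n. integral\<^sup>L (prof n m D) (p i))"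
      using BIC unfolding v mech_rev_def BIC_IR_mech_def well_defined_mech_def
      by (intro Bochner_Integration.integral_sum) auto
    also have "\<dots> \<le> (\<Sum>i<n. real m * H)"
      by (rule sum_mono) (use expected_payment_le[OF cadd D BIC _ \<open>0 \<le> H\<close>] in simp)
    finally show "v \<le> real n * (real m * H)" by simp
  qed
  ultimately show ?thesis unfolding OPT_def revenues_def[symmetric] by (rule cSup_upper)
qed

lemma spem_exp_rev_eq_clipped:
  assumes empty: "\<forall>i<n. {} \<in> I i"
    and prices: "\<forall>i<n. \<forall>j<m. pr i j \<ge> 0"
    and fees: "\<forall>i<n. \<forall>S. S \<subseteq> {..<m} \<longrightarrow> \<delta> i S \<ge> 0"
    and ties: "\<forall>i<n. inj_on (rk i) (Pow {..<m})"
    and "0 \<le> H"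
    and L: "\<forall>i<n. \<forall>j<m. prob_space (L i j) \<and> sets (L i j) = sets borel \<and> measure (L i j) {0..H} = 1"
  shows "spem_exp_rev n m I pr \<delta> rk L = (\<integral>t. max 0 (min (real m * H) (spem_rev n m I pr \<delta> rk t))
    \<partial>PiM ({..<n} \<times> {..<m}) (profile_coord n m L))"
proof -
  let ?P = "PiM ({..<n} \<times> {..<m}) (profile_coord n m L)"
  have "spem_rev n m I pr \<delta> rk \<in> borel_measurable ?P"
    using profile_coord(2)[OF L] ties by (rule borel_measurable_spem_rev)
  moreover have "AE t in ?P. \<forall>k\<in>{..<n} \<times> {..<m}. t k \<in> {0..H}"
    using profile_coord(1,3)[OF L] by (intro AE_PiM_all_in) auto
  then have "AE t in ?P. spem_rev n m I pr \<delta> rk t = max 0 (min (real m * H) (spem_rev n m I pr \<delta> rk t))"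
    by eventually_elim (use spem_rev_bounded[OF prices fees empty _ \<open>0 \<le> H\<close>] in auto)
  ultimately show ?thesis
    unfolding spem_exp_rev_def prof_eq_PiM_profile_coord by (intro integral_cong_AE) auto
qed

lemma spem_exp_rev_diff_le:
  assumes cadd: "\<forall>i<n. constrained_family m (I i)"
    and D: "\<forall>i<n. \<forall>j<m. prob_space (D i j) \<and> sets (D i j) = sets borel \<and> measure (D i j) {0..H} = 1"
    and Dh: "\<forall>i<n. \<forall>j<m. prob_space (Dh i j) \<and> sets (Dh i j) = sets borel \<and> measure (Dh i j) {0..H} = 1"
    and K: "\<forall>i<n. \<forall>j<m. kolmogorov_dist (D i j) (Dh i j) \<le> \<xi>"
    and prices: "\<forall>i<n. \<forall>j<m. pr i j \<ge> 0"
    and fees: "\<forall>i<n. \<forall>S. S \<subseteq> {..<m} \<longrightarrow> \<delta> i S \<ge> 0"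
    and ties: "\<forall>i<n. inj_on (rk i) (Pow {..<m})"
    and "0 \<le> H"
  shows "\<bar>spem_exp_rev n m I pr \<delta> rk D - spem_exp_rev n m I pr \<delta> rk Dh\<bar> \<le> 2 * real n * real m * \<xi> * (real m * H)"
proof -
  define G where "G = {..<n} \<times> {..<m}"
  define C where "C = real m * H"
  define f where "f t = max 0 (min C (spem_rev n m I pr \<delta> rk t))" for t
  have empty: "\<forall>i<n. {} \<in> I i" using cadd unfolding constrained_family_def by blast
  note rev_f = spem_exp_rev_eq_clipped[OF empty prices fees ties \<open>0 \<le> H\<close>, folded G_def C_def, folded f_def]
  have "\<bar>integral\<^sup>L (PiM G (profile_coord n m D)) f - integral\<^sup>L (PiM G (profile_coord n m Dh)) f\<bar>
      \<le> 2 * real (card G) * \<xi> * C"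
  proof (rule PiM_hybrid)
    show "finite G" unfolding G_def by simp
    show "f \<in> borel_measurable (PiM G (profile_coord n m D))"
      unfolding f_def G_def using profile_coord(2)[OF D] ties
      by (intro borel_measurable_max borel_measurable_min borel_measurable_const borel_measurable_spem_rev)
    show "f t \<in> {0..C}" for t unfolding f_def C_def using \<open>0 \<le> H\<close> by auto
    show "two_step_on {0..H} C (\<lambda>x. f (t(k := x)))"
      if "k \<in> G" "\<And>k'. k' \<in> G - {k} \<Longrightarrow> t k' \<in> {0..H}" for k t
    proof (rule two_step_on_cong)
      show "two_step_on {0..H} C (\<lambda>x. spem_rev n m I pr \<delta> rk (t(k := x)))"
        using that unfolding C_def G_def
        by (intro spem_rev_two_step[OF cadd prices fees ties \<open>0 \<le> H\<close>])
      show "spem_rev n m I pr \<delta> rk (t(k := x)) = f (t(k := x))" if "x \<in> {0..H}" for x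
        using spem_rev_bounded[OF prices fees empty _ \<open>0 \<le> H\<close>, of "t(k := x)"] \<open>x \<in> {0..H}\<close>
          \<open>\<And>k'. k' \<in> G - {k} \<Longrightarrow> t k' \<in> {0..H}\<close> unfolding f_def C_def G_def by auto
    qed
  qed (use profile_coord[OF D] profile_coord[OF Dh] K in \<open>auto simp: G_def profile_coord_def\<close>)
  then show ?thesis
    unfolding rev_f[OF D] rev_f[OF Dh] C_def G_def by (simp add: card_cartesian_product mult_ac)
qed

theorem mainTheorem20:
  fixes n m :: nat and H \<xi> :: real
    and D Dh :: "nat \<Rightarrow> nat \<Rightarrow> real measure"
    and I :: "nat \<Rightarrow> nat set set"
    and pr :: "nat \<Rightarrow> nat \<Rightarrow> real" and \<delta> :: "nat \<Rightarrow> nat set \<Rightarrow> real"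
    and rk :: "nat \<Rightarrow> nat set \<Rightarrow> nat"
  assumes cadd: "\<forall>i<n. constrained_family m (I i)"
    and D: "\<forall>i<n. \<forall>j<m. prob_space (D i j) \<and> sets (D i j) = sets borel \<and> measure (D i j) {0..H} = 1"
    and Dh: "\<forall>i<n. \<forall>j<m. prob_space (Dh i j) \<and> sets (Dh i j) = sets borel \<and> measure (Dh i j) {0..H} = 1"
    and K: "\<forall>i<n. \<forall>j<m. kolmogorov_dist (D i j) (Dh i j) \<le> \<xi>"
    and prices: "\<forall>i<n. \<forall>j<m. pr i j \<ge> 0"
    and fees: "\<forall>i<n. \<forall>S. S \<subseteq> {..<m} \<longrightarrow> \<delta> i S \<ge> 0"
    and ties: "\<forall>i<n. inj_on (rk i) (Pow {..<m})"
  shows "\<bar>spem_exp_rev n m I pr \<delta> rk D - spem_exp_rev n m I pr \<delta> rk Dh\<bar>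
           \<le> 2 * real n * real m * \<xi> * (real m * H + OPT n m H I D)"
proof (cases "n = 0 \<or> m = 0")
  case True
  then have "prof n m D = prof n m Dh" unfolding prof_def by (intro PiM_cong) auto
  then show ?thesis using True unfolding spem_exp_rev_def by auto
next
  case False
  then have "0 < n" "0 < m" by auto
  then have "measure (D 0 0) {0..H} = 1" using D by blast
  then have "0 \<le> H" by (cases "0 \<le> H") auto
  have "0 \<le> \<xi>" using K kolmogorov_dist_nonneg[of "D 0 0" "Dh 0 0"] D Dh \<open>0 < n\<close> \<open>0 < m\<close> by force
  have "\<bar>spem_exp_rev n m I pr \<delta> rk D - spem_exp_rev n m I pr \<delta> rk Dh\<bar> \<le> 2 * real n * real m * \<xi> * (real m * H)"
    by (rule spem_exp_rev_diff_le[OF cadd D Dh K prices fees ties \<open>0 \<le> H\<close>])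
  also have "\<dots> \<le> 2 * real n * real m * \<xi> * (real m * H + OPT n m H I D)"
    using OPT_nonneg[OF cadd D \<open>0 \<le> H\<close>] \<open>0 \<le> \<xi>\<close> by (intro mult_left_mono) auto
  finally show ?thesis .
qed

end
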